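(* Consider matrices $F_k,C_k\in\mathbb R^{m\times n}$, $H_k\in\mathbb R^{p\times n}$, positive definite symmetric $S_k\in\mathbb R^{m\times m}$, $R_k\in\mathbb R^{p\times p}$, and observations $y_k\in\mathbb R^p$, $k=0,1,2,\dots$, for the descriptor system $F_{k+1}x_{k+1}-C_kx_k=f_{k+1}$, $F_0x_0=f_0$, $y_k=H_kx_k+g_k$ with uncertainty set (for each horizon $\tau$) $\langle S_0f_0,f_0\rangle+\sum_{i=1}^{\tau}\langle S_{i-1}f_i,f_i\rangle+\sum_{i=0}^{\tau}\langle R_ig_i,g_i\rangle\le1$. Let $P_k,r_k,B_k$ be defined by $P_0=F_0'S_0F_0+H_0'R_0H_0$, $r_0=H_0'R_0y_0$, $B_k=P_k+C_k'S_kC_k$, and for $k\ge1$ $P_k=H_k'R_kH_k+F_k'[S_{k-1}-S_{k-1}C_{k-1}B_{k-1}^+C_{k-1}'S_{k-1}]F_k$, $r_k=F_k'S_{k-1}C_{k-1}B_{k-1}^+r_{k-1}+H_k'R_ky_k$. Let $\hat x_{k|k}$, $P_{k|k}$, $A_k$ be defined by $P_{0|0}^{-1}=F_0'S_0F_0+H_0'R_0H_0$, $\hat x_{0|0}=P_{0|0}H_0'R_0y_0$, $A_k^{-1}=S_k^{-1}+C_kP_{k|k}C_k'$, and for $k\ge1$ $P_{k|k}^{-1}=F_k'A_{k-1}F_k+H_k'R_kH_k$, $\hat x_{k|k}=P_{k|k}F_k'A_{k-1}C_{k-1}\hat x_{k-1|k-1}+P_{k|k}H_k'R_ky_k$. If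 $\mathrm{rank}\begin{bmatrix}F_k\\H_k\end{bmatrix}=n$ for all $k$, then for all $k$ the index of non-causality satisfies $I_k=0$ and $P_k^+r_k=\hat x_{k|k}$.
   Context: $A'$ denotes transpose and $A^+$ the Moore–Penrose pseudoinverse. For horizon $k$, let $X(k)$ be the set of states $x_k$ for which there exist $x_0,\dots,x_{k-1}$ such that the residuals $f_0=F_0x_0$, $f_{j+1}=F_{j+1}x_{j+1}-C_jx_j$, $g_j=y_j-H_jx_j$ ($j\le k$) satisfy the uncertainty constraint with $\tau=k$. The $\ell$-error is $\hat\rho(\ell,k):=\inf_{z\in X(k)}\sup_{x\in X(k)}|\langle\ell,x-z\rangle|$, the minimax observable subspace is $\mathcal L(k):=\{\ell\in\mathbb R^n:\hat\rho(\ell,k)<\infty\}$, and the index of non-causality is $I_k:=n-\dim\mathcal L(k)$. The observations $y_k$ are assumed generated by some trajectory whose inputs and noises satisfy the uncertainty constraint. *)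

theory Defs
  imports "HOL-Analysis.Analysis"
begin

definition is_pinv :: "real^'n^'m \<Rightarrow> real^'m^'n \<Rightarrow> bool" where
  "is_pinv A X \<longleftrightarrow> A ** X ** A = A \<and> X ** A ** X = X \<and>
     transpose (A ** X) = A ** X \<and> transpose (X ** A) = X ** A"

definition pinv :: "real^'n^'m \<Rightarrow> real^'m^'n" where
  "pinv A = (THE X. is_pinv A X)"

definition sym_posdef :: "real^'m^'m \<Rightarrow> bool" where
  "sym_posdef S \<longleftrightarrow> transpose S = S \<and> (\<forall>x. x \<noteq> 0 \<longrightarrow> x \<bullet> (S *v x) > 0)"

definition stack :: "real^'n^'m \<Rightarrow> real^'n^'p \<Rightarrow> real^'n^('m + 'p)" where
  "stack F H = (\<chi> i. case i of Inl a \<Rightarrow> F $ a | Inr b \<Rightarrow> H $ b)"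

definition unc :: "(nat \<Rightarrow> real^'n^'m) \<Rightarrow> (nat \<Rightarrow> real^'n^'m) \<Rightarrow> (nat \<Rightarrow> real^'n^'p)
   \<Rightarrow> (nat \<Rightarrow> real^'m^'m) \<Rightarrow> (nat \<Rightarrow> real^'p^'p) \<Rightarrow> (nat \<Rightarrow> real^'p)
   \<Rightarrow> (nat \<Rightarrow> real^'n) \<Rightarrow> nat \<Rightarrow> real" where
  "unc F C H S R y xs \<tau> =
     (let f0 = F 0 *v xs 0;
          f = (\<lambda>j. F j *v xs j - C (j - 1) *v xs (j - 1));
          g = (\<lambda>j. y j - H j *v xs j)
      in (S 0 *v f0) \<bullet> f0 + (\<Sum>i=1..\<tau>. (S (i - 1) *v f i) \<bullet> f i)
         + (\<Sum>i=0..\<tau>. (R i *v g i) \<bullet> g i))"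

definition Xset :: "(nat \<Rightarrow> real^'n^'m) \<Rightarrow> (nat \<Rightarrow> real^'n^'m) \<Rightarrow> (nat \<Rightarrow> real^'n^'p)
   \<Rightarrow> (nat \<Rightarrow> real^'m^'m) \<Rightarrow> (nat \<Rightarrow> real^'p^'p) \<Rightarrow> (nat \<Rightarrow> real^'p)
   \<Rightarrow> nat \<Rightarrow> (real^'n) set" where
  "Xset F C H S R y k = {xs k | xs. unc F C H S R y xs k \<le> 1}"

definition rho_hat :: "(nat \<Rightarrow> real^'n^'m) \<Rightarrow> (nat \<Rightarrow> real^'n^'m) \<Rightarrow> (nat \<Rightarrow> real^'n^'p)
   \<Rightarrow> (nat \<Rightarrow> real^'m^'m) \<Rightarrow> (nat \<Rightarrow> real^'p^'p) \<Rightarrow> (nat \<Rightarrow> real^'p)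
   \<Rightarrow> real^'n \<Rightarrow> nat \<Rightarrow> ereal" where
  "rho_hat F C H S R y l k =
     (INF z\<in>Xset F C H S R y k. SUP x\<in>Xset F C H S R y k. ereal \<bar>l \<bullet> (x - z)\<bar>)"

definition Lsub :: "(nat \<Rightarrow> real^'n^'m) \<Rightarrow> (nat \<Rightarrow> real^'n^'m) \<Rightarrow> (nat \<Rightarrow> real^'n^'p)
   \<Rightarrow> (nat \<Rightarrow> real^'m^'m) \<Rightarrow> (nat \<Rightarrow> real^'p^'p) \<Rightarrow> (nat \<Rightarrow> real^'p)
   \<Rightarrow> nat \<Rightarrow> (real^'n) set" where
  "Lsub F C H S R y k = {l. rho_hat F C H S R y l k < \<infinity>}"

definition noncaus_index :: "(nat \<Rightarrow> real^'n^'m) \<Rightarrow> (nat \<Rightarrow> real^'n^'m) \<Rightarrow> (nat \<Rightarrow> real^'n^'p)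
   \<Rightarrow> (nat \<Rightarrow> real^'m^'m) \<Rightarrow> (nat \<Rightarrow> real^'p^'p) \<Rightarrow> (nat \<Rightarrow> real^'p)
   \<Rightarrow> nat \<Rightarrow> nat" where
  "noncaus_index F C H S R y k = CARD('n) - dim (Lsub F C H S R y k)"

fun Pr :: "(nat \<Rightarrow> real^'n^'m) \<Rightarrow> (nat \<Rightarrow> real^'n^'m) \<Rightarrow> (nat \<Rightarrow> real^'n^'p)
   \<Rightarrow> (nat \<Rightarrow> real^'m^'m) \<Rightarrow> (nat \<Rightarrow> real^'p^'p) \<Rightarrow> (nat \<Rightarrow> real^'p)
   \<Rightarrow> nat \<Rightarrow> (real^'n^'n) \<times> (real^'n)" where
  "Pr F C H S R y 0 =
     (transpose (F 0) ** S 0 ** F 0 + transpose (H 0) ** R 0 ** H 0,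
      transpose (H 0) ** R 0 *v y 0)"
| "Pr F C H S R y (Suc k) =
     (let P = fst (Pr F C H S R y k); r = snd (Pr F C H S R y k);
          B = P + transpose (C k) ** S k ** C k
      in (transpose (H (Suc k)) ** R (Suc k) ** H (Suc k)
            + transpose (F (Suc k)) ** (S k - S k ** C k ** pinv B ** transpose (C k) ** S k) ** F (Suc k),
          transpose (F (Suc k)) ** S k ** C k ** pinv B *v r
            + transpose (H (Suc k)) ** R (Suc k) *v y (Suc k)))"

definition Amat :: "real^'m^'m \<Rightarrow> real^'n^'m \<Rightarrow> real^'n^'n \<Rightarrow> real^'m^'m" where
  "Amat Sk Ck Pkk = matrix_inv (matrix_inv Sk + Ck ** Pkk ** transpose Ck)"

fun Kf :: "(nat \<Rightarrow> real^'n^'m) \<Rightarrow> (nat \<Rightarrow> real^'n^'m) \<Rightarrow> (nat \<Rightarrow> real^'n^'p)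
   \<Rightarrow> (nat \<Rightarrow> real^'m^'m) \<Rightarrow> (nat \<Rightarrow> real^'p^'p) \<Rightarrow> (nat \<Rightarrow> real^'p)
   \<Rightarrow> nat \<Rightarrow> (real^'n^'n) \<times> (real^'n)" where
  "Kf F C H S R y 0 =
     (let P00 = matrix_inv (transpose (F 0) ** S 0 ** F 0 + transpose (H 0) ** R 0 ** H 0)
      in (P00, P00 ** transpose (H 0) ** R 0 *v y 0))"
| "Kf F C H S R y (Suc k) =
     (let Pp = fst (Kf F C H S R y k); xp = snd (Kf F C H S R y k);
          A = Amat (S k) (C k) Pp;
          Pn = matrix_inv (transpose (F (Suc k)) ** A ** F (Suc k)
                 + transpose (H (Suc k)) ** R (Suc k) ** H (Suc k))
      in (Pn, Pn ** transpose (F (Suc k)) ** A ** C k *v xp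
              + Pn ** transpose (H (Suc k)) ** R (Suc k) *v y (Suc k)))"

end

theory Submission
  imports Defs
begin

text \<open>Under the rank condition every information matrix \<open>P\<^sub>k\<close> is positive definite: inductively,
  the Schur complement \<open>S - S C B\<^sup>+ C' S\<close> is, by the Woodbury identity, the positive definite
  matrix \<open>A\<^sub>k\<close>, and \<open>F' A F + H' R H\<close> is positive definite because \<open>[F; H]\<close> is injective.
  Hence \<open>P\<^sub>k\<^sup>+ = P\<^sub>k\<^sup>-\<^sup>1\<close>, and the same Woodbury identities show \<open>P\<^sub>k\<^sub>|\<^sub>k = P\<^sub>k\<^sup>-\<^sup>1\<close> and
  \<open>x\<^sub>k\<^sub>|\<^sub>k = P\<^sub>k\<^sup>-\<^sup>1 r\<^sub>k\<close>.

  For \<open>I\<^sub>k = 0\<close>: the uncertainty constraint bounds every residual \<open>f\<^sub>i\<close>, \<open>g\<^sub>i\<close>, so \<open>F\<^sub>i x\<^sub>i\<close> and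
  \<open>H\<^sub>i x\<^sub>i\<close> stay bounded once \<open>x\<^sub>i\<^sub>-\<^sub>1\<close> does, and injectivity of \<open>[F\<^sub>i; H\<^sub>i]\<close> bounds \<open>x\<^sub>i\<close>.
  Thus \<open>X(k)\<close> is bounded, and nonempty by the data assumption, so every \<open>\<ell>\<close>-error is finite.\<close>

lemma matrix_add_rdistrib: "((A::real^'n^'m) + B) ** (C::real^'p^'n) = A ** C + B ** C"
  by (vector matrix_matrix_mult_def sum.distrib[symmetric] field_simps)

lemma matrix_diff_ldistrib: "(A::real^'n^'m) ** ((B::real^'p^'n) - C) = A ** B - A ** C"
  by (vector matrix_matrix_mult_def sum_subtractf[symmetric] field_simps)

lemma matrix_diff_rdistrib: "((A::real^'n^'m) - B) ** (C::real^'p^'n) = A ** C - B ** C"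
  by (vector matrix_matrix_mult_def sum_subtractf[symmetric] field_simps)

lemma transpose_add: "transpose ((A::real^'n^'m) + B) = transpose A + transpose B"
  by (simp add: transpose_def vec_eq_iff)

lemma inner_transpose_mult: "(x::real^'n) \<bullet> (transpose F *v w) = (F *v x) \<bullet> w"
  using dot_lmul_matrix[of w F x] by (simp add: inner_commute)

lemma matrix_inv_right_left:
  assumes "invertible (A::real^'n^'n)"
  shows matrix_inv_right: "A ** matrix_inv A = mat 1"
    and matrix_inv_left: "matrix_inv A ** A = mat 1"
  using someI_ex[OF assms[unfolded invertible_def]] unfolding matrix_inv_def by auto

lemma matrix_inv_cancel:
  assumes "invertible (A::real^'n^'n)"
  shows "A ** (matrix_inv A ** Z) = Z" "matrix_inv A ** (A ** Z) = Z"
  by (simp_all add: matrix_mul_assoc matrix_inv_right_left[OF assms])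

lemma matrix_inv_unique:
  assumes "(A::real^'n^'n) ** X = mat 1"
  shows "matrix_inv A = X"
proof -
  have inv: "invertible A"
    using assms invertible_right_inverse by blast
  have "matrix_inv A = matrix_inv A ** (A ** X)"
    using assms by simp
  also have "\<dots> = X"
    by (simp add: matrix_inv_cancel[OF inv])
  finally show ?thesis .
qed

lemma matrix_inv_unique_left: "X ** (A::real^'n^'n) = mat 1 \<Longrightarrow> matrix_inv A = X"
  using matrix_left_right_inverse matrix_inv_unique by blast

lemma pinv_invertible:
  assumes inv: "invertible (A::real^'n^'n)"
  shows "pinv A = matrix_inv A"
proof -
  have "X = matrix_inv A" if "is_pinv A X" for X
  proof -
    have "matrix_inv A ** (A ** X ** A) ** matrix_inv A = matrix_inv A ** A ** matrix_inv A"
      using that by (simp add: is_pinv_def)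
    then show ?thesis
      by (simp add: matrix_mul_assoc[symmetric] matrix_inv_cancel[OF inv] matrix_inv_right_left[OF inv])
  qed
  moreover have "is_pinv A (matrix_inv A)"
    unfolding is_pinv_def using matrix_inv_right_left[OF inv] by simp
  ultimately show ?thesis
    unfolding pinv_def by blast
qed

lemma woodbury_inverse:
  fixes S :: "real^'m^'m" and P B :: "real^'n^'n" and C :: "real^'n^'m"
  assumes iS: "invertible S" and iP: "invertible P" and iB: "invertible B"
    and B: "B = P + transpose C ** S ** C"
  shows "matrix_inv (matrix_inv S + C ** matrix_inv P ** transpose C)
           = S - S ** C ** matrix_inv B ** transpose C ** S"
proof (rule matrix_inv_unique)
  have "matrix_inv P ** (transpose C ** (S ** (C ** (matrix_inv B ** Z)))) =
        matrix_inv P ** Z - matrix_inv B ** Z" for Z :: "real^'m^'n"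
  proof -
    have "transpose C ** (S ** (C ** (matrix_inv B ** Z))) = (B - P) ** (matrix_inv B ** Z)"
      by (simp add: B matrix_mul_assoc)
    also have "\<dots> = Z - P ** (matrix_inv B ** Z)"
      by (simp add: matrix_diff_rdistrib matrix_inv_cancel[OF iB])
    finally show ?thesis
      by (simp add: matrix_diff_ldistrib matrix_inv_cancel[OF iP])
  qed
  then show "(matrix_inv S + C ** matrix_inv P ** transpose C) **
               (S - S ** C ** matrix_inv B ** transpose C ** S) = mat 1"
    by (simp add: matrix_mul_assoc[symmetric] matrix_add_ldistrib matrix_add_rdistrib
        matrix_diff_ldistrib matrix_diff_rdistrib matrix_inv_cancel[OF iS] matrix_inv_left[OF iS])
qed

lemma woodbury_gain:
  fixes S :: "real^'m^'m" and P B :: "real^'n^'n" and C :: "real^'n^'m"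
  assumes iP: "invertible P" and iB: "invertible B"
    and B: "B = P + transpose C ** S ** C"
  shows "(S - S ** C ** matrix_inv B ** transpose C ** S) ** C ** matrix_inv P
           = S ** C ** matrix_inv B"
proof -
  have "matrix_inv B ** (transpose C ** (S ** (C ** matrix_inv P)))
          = matrix_inv B ** ((B - P) ** matrix_inv P)"
    by (simp add: B matrix_mul_assoc)
  also have "\<dots> = matrix_inv P - matrix_inv B"
    by (simp add: matrix_diff_rdistrib matrix_diff_ldistrib matrix_inv_cancel[OF iB]
        matrix_inv_right[OF iP] matrix_inv_left[OF iB] matrix_mul_assoc)
  finally show ?thesis
    by (simp add: matrix_mul_assoc[symmetric] matrix_diff_ldistrib matrix_diff_rdistrib)
qed

subsection \<open>Positive definite matrices\<close>

lemma sym_posdefD: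
  assumes "sym_posdef S"
  shows "transpose S = S" and "x \<noteq> 0 \<Longrightarrow> 0 < x \<bullet> (S *v x)"
  using assms by (simp_all add: sym_posdef_def)

lemma sym_posdef_nonneg: "sym_posdef S \<Longrightarrow> 0 \<le> x \<bullet> (S *v x)"
  by (cases "x = 0") (auto dest: sym_posdefD(2) intro: less_imp_le)

lemma sym_posdef_invertible: "sym_posdef (S::real^'n^'n) \<Longrightarrow> invertible S"
  by (metis invertible_left_inverse matrix_left_invertible_ker sym_posdefD(2)
      inner_zero_right less_irrefl)

lemma sym_posdef_matrix_inv:
  assumes pd: "sym_posdef (S::real^'n^'n)"
  shows "sym_posdef (matrix_inv S)"
  unfolding sym_posdef_def
proof (intro conjI allI impI)
  have inv: "invertible S"
    using pd by (rule sym_posdef_invertible)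
  have "transpose (matrix_inv S) ** S = mat 1"
    by (metis matrix_transpose_mul matrix_inv_right[OF inv] sym_posdefD(1)[OF pd] transpose_mat)
  then show "transpose (matrix_inv S) = matrix_inv S"
    by (metis matrix_inv_unique_left)
  fix x :: "real^'n"
  assume "x \<noteq> 0"
  define v where "v = matrix_inv S *v x"
  have x: "x = S *v v"
    by (simp add: v_def matrix_vector_mul_assoc matrix_inv_right[OF inv])
  with \<open>x \<noteq> 0\<close> have "0 < v \<bullet> (S *v v)"
    by (auto intro: sym_posdefD(2)[OF pd])
  moreover have "x \<bullet> (matrix_inv S *v x) = v \<bullet> (S *v v)"
    by (simp only: v_def[symmetric]) (simp add: x inner_commute)
  ultimately show "0 < x \<bullet> (matrix_inv S *v x)"
    by simp
qed

lemma quadratic_form_congruence: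
  fixes F :: "real^'n^'m"
  shows "x \<bullet> ((transpose F ** A ** F) *v x) = (F *v x) \<bullet> (A *v (F *v (x::real^'n)))"
  by (simp only: matrix_vector_mul_assoc[symmetric] inner_transpose_mult)

lemma transpose_congruence:
  fixes F :: "real^'n^'m"
  assumes "transpose A = A"
  shows "transpose (transpose F ** A ** F) = transpose F ** A ** F"
proof -
  have "transpose (transpose F ** A ** F) = transpose F ** (transpose A ** F)"
    by (simp only: matrix_transpose_mul transpose_transpose)
  then show ?thesis
    using assms by (simp add: matrix_mul_assoc)
qed

lemma sym_posdef_add_congruence:
  fixes P :: "real^'n^'n" and Q :: "real^'m^'m" and C :: "real^'n^'m"
  assumes P: "sym_posdef P" and Q: "sym_posdef Q"
  shows "sym_posdef (P + transpose C ** Q ** C)"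
  unfolding sym_posdef_def
proof (intro conjI allI impI)
  show "transpose (P + transpose C ** Q ** C) = P + transpose C ** Q ** C"
    using sym_posdefD(1)[OF P] sym_posdefD(1)[OF Q] by (simp add: transpose_add transpose_congruence)
  fix x :: "real^'n"
  assume "x \<noteq> 0"
  then have "0 < x \<bullet> (P *v x)"
    by (rule sym_posdefD(2)[OF P])
  moreover have "0 \<le> x \<bullet> ((transpose C ** Q ** C) *v x)"
    by (simp only: quadratic_form_congruence sym_posdef_nonneg[OF Q])
  ultimately show "0 < x \<bullet> ((P + transpose C ** Q ** C) *v x)"
    by (simp add: matrix_vector_mult_add_rdistrib inner_add_right)
qed

lemma stack_full_rank_injective:
  assumes "rank (stack F H) = CARD('n)" and "F *v x = 0" and "H *v (x::real^'n) = 0"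
  shows "x = 0"
proof -
  have "stack F H *v x = stack F H *v 0"
    using assms(2,3)
    by (simp add: vec_eq_iff stack_def matrix_vector_mult_def split: sum.split)
  then show ?thesis
    using assms(1) full_rank_injective by (metis injD)
qed

lemma sym_posdef_stack_congruence:
  fixes F :: "real^'n^'m" and H :: "real^'n^'p"
  assumes A: "sym_posdef A" and R: "sym_posdef R" and rank: "rank (stack F H) = CARD('n)"
  shows "sym_posdef (transpose F ** A ** F + transpose H ** R ** H)"
  unfolding sym_posdef_def
proof (intro conjI allI impI)
  show "transpose (transpose F ** A ** F + transpose H ** R ** H)
          = transpose F ** A ** F + transpose H ** R ** H"
    using sym_posdefD(1)[OF A] sym_posdefD(1)[OF R] by (simp add: transpose_add transpose_congruence)
  fix x :: "real^'n"
  assume "x \<noteq> 0"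
  then have "F *v x \<noteq> 0 \<or> H *v x \<noteq> 0"
    using stack_full_rank_injective[OF rank] by blast
  then have "0 < (F *v x) \<bullet> (A *v (F *v x)) \<or> 0 < (H *v x) \<bullet> (R *v (H *v x))"
    using sym_posdefD(2)[OF A] sym_posdefD(2)[OF R] by blast
  moreover have "0 \<le> (F *v x) \<bullet> (A *v (F *v x))" "0 \<le> (H *v x) \<bullet> (R *v (H *v x))"
    using sym_posdef_nonneg A R by auto
  ultimately have "0 < (F *v x) \<bullet> (A *v (F *v x)) + (H *v x) \<bullet> (R *v (H *v x))"
    by (auto intro: add_pos_nonneg add_nonneg_pos)
  then show "0 < x \<bullet> ((transpose F ** A ** F + transpose H ** R ** H) *v x)"
    by (simp add: matrix_vector_mult_add_rdistrib inner_add_right quadratic_form_congruence)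
qed

subsection \<open>The two recursions agree\<close>

lemma Pr_posdef_Kf_eq:
  fixes F C :: "nat \<Rightarrow> real^'n^'m" and H :: "nat \<Rightarrow> real^'n^'p"
    and S :: "nat \<Rightarrow> real^'m^'m" and R :: "nat \<Rightarrow> real^'p^'p"
    and y :: "nat \<Rightarrow> real^'p"
  assumes S_pd: "\<And>k. sym_posdef (S k)"
    and R_pd: "\<And>k. sym_posdef (R k)"
    and rank_full: "\<And>k. rank (stack (F k) (H k)) = CARD('n)"
  shows "sym_posdef (fst (Pr F C H S R y k))
     \<and> fst (Kf F C H S R y k) = matrix_inv (fst (Pr F C H S R y k))
     \<and> snd (Kf F C H S R y k) = matrix_inv (fst (Pr F C H S R y k)) *v snd (Pr F C H S R y k)"
proof (induction k)
  case 0
  show ?case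
    using sym_posdef_stack_congruence[OF S_pd R_pd rank_full, of 0 0 0]
    by (simp add: Let_def matrix_vector_mul_assoc matrix_mul_assoc)
next
  case (Suc k)
  define P where "P = fst (Pr F C H S R y k)"
  define r where "r = snd (Pr F C H S R y k)"
  define B where "B = P + transpose (C k) ** S k ** C k"
  define A where "A = Amat (S k) (C k) (matrix_inv P)"
  define P' where "P' = transpose (F (Suc k)) ** A ** F (Suc k)
                         + transpose (H (Suc k)) ** R (Suc k) ** H (Suc k)"
  have P: "sym_posdef P" and Kf_k: "Kf F C H S R y k = (matrix_inv P, matrix_inv P *v r)"
    using Suc.IH by (auto simp: P_def r_def prod_eq_iff)
  have B_pd: "sym_posdef B"
    unfolding B_def by (rule sym_posdef_add_congruence[OF P S_pd])
  have iS: "invertible (S k)" and iP: "invertible P" and iB: "invertible B"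
    using sym_posdef_invertible B_pd P S_pd by auto
  have A_schur: "A = S k - S k ** C k ** matrix_inv B ** transpose (C k) ** S k"
    unfolding A_def Amat_def by (rule woodbury_inverse[OF iS iP iB B_def])
  have "sym_posdef (matrix_inv (S k) + transpose (transpose (C k)) ** matrix_inv P ** transpose (C k))"
    by (rule sym_posdef_add_congruence[OF sym_posdef_matrix_inv[OF S_pd] sym_posdef_matrix_inv[OF P]])
  then have "sym_posdef A"
    unfolding A_def Amat_def by (simp add: sym_posdef_matrix_inv)
  then have P'_pd: "sym_posdef P'"
    unfolding P'_def by (rule sym_posdef_stack_congruence[OF _ R_pd rank_full])
  have Pr_Suc: "Pr F C H S R y (Suc k) =
     (P', transpose (F (Suc k)) ** S k ** C k ** matrix_inv B *v r
            + transpose (H (Suc k)) ** R (Suc k) *v y (Suc k))"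
    by (simp add: Let_def P_def[symmetric] r_def[symmetric] B_def[symmetric] P'_def
        pinv_invertible[OF iB] A_schur add.commute)
  have Kf_Suc: "Kf F C H S R y (Suc k) =
     (matrix_inv P', matrix_inv P' ** transpose (F (Suc k)) ** A ** C k *v (matrix_inv P *v r)
                     + matrix_inv P' ** transpose (H (Suc k)) ** R (Suc k) *v y (Suc k))"
    by (simp add: Let_def Kf_k A_def[symmetric] P'_def)
  have gain: "A ** C k ** matrix_inv P = S k ** C k ** matrix_inv B"
    unfolding A_schur by (rule woodbury_gain[OF iP iB B_def])
  have "matrix_inv P' ** transpose (F (Suc k)) ** A ** C k *v (matrix_inv P *v r)
      = (matrix_inv P' ** transpose (F (Suc k)) ** (A ** C k ** matrix_inv P)) *v r"
    by (simp add: matrix_vector_mul_assoc matrix_mul_assoc)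
  also have "\<dots> = matrix_inv P' *v (transpose (F (Suc k)) ** S k ** C k ** matrix_inv B *v r)"
    by (simp add: gain matrix_vector_mul_assoc matrix_mul_assoc)
  finally show ?case
    using P'_pd unfolding Pr_Suc Kf_Suc
    by (simp add: matrix_vector_right_distrib matrix_vector_mul_assoc matrix_mul_assoc)
qed

subsection \<open>Boundedness of the reachable set\<close>

lemma homogeneous_positive_bounded_below:
  fixes q :: "'a::euclidean_space \<Rightarrow> real"
  assumes cont: "continuous_on UNIV q" and pos: "\<And>x. x \<noteq> 0 \<Longrightarrow> q x > 0"
    and hom: "\<And>c x. q (c *\<^sub>R x) = c^2 * q x"
  obtains lam where "lam > 0" "\<And>x. lam * (norm x)^2 \<le> q x"
proof -
  have "sphere (0::'a) 1 \<noteq> {}"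
    by (simp add: sphere_eq_empty)
  then obtain u where u: "u \<in> sphere 0 1" "\<And>v. v \<in> sphere 0 1 \<Longrightarrow> q u \<le> q v"
    using continuous_attains_inf[OF compact_sphere _ continuous_on_subset[OF cont]] by blast
  have "q u > 0"
    using u(1) by (intro pos) auto
  moreover have "q u * (norm x)^2 \<le> q x" for x
  proof (cases "x = 0")
    case True
    then show ?thesis using hom[of 0 x] by simp
  next
    case False
    have "q u \<le> q (x /\<^sub>R norm x)"
      using False by (intro u(2)) simp
    moreover have "q x = (norm x)^2 * q (x /\<^sub>R norm x)"
      using False hom[of "norm x" "x /\<^sub>R norm x"] by simp
    ultimately show ?thesis
      by (metis mult.commute mult_right_mono zero_le_power2)
  qed
  ultimately show thesis ..
qed

lemma norm_le_sqrt_of_coercive: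
  assumes "lam > 0" "lam * (norm x)^2 \<le> K"
  shows "norm x \<le> sqrt (K / lam)"
  using assms by (intro real_le_rsqrt) (simp add: pos_le_divide_eq mult.commute)

lemma sym_posdef_sublevel_bounded:
  assumes pd: "sym_posdef (S::real^'m^'m)"
  obtains M where "\<And>v. (S *v v) \<bullet> v \<le> 1 \<Longrightarrow> norm v \<le> M"
proof -
  have "continuous_on UNIV (\<lambda>x. x \<bullet> (S *v x))"
    by (intro continuous_intros linear_continuous_on matrix_vector_mul_bounded_linear)
  moreover have "c *\<^sub>R x \<bullet> (S *v (c *\<^sub>R x)) = c^2 * (x \<bullet> (S *v x))" for c x
    by (simp add: matrix_vector_mult_scaleR power2_eq_square)
  ultimately obtain lam where lam: "lam > 0" "\<And>x. lam * (norm x)^2 \<le> x \<bullet> (S *v x)"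
    using homogeneous_positive_bounded_below[of "\<lambda>x. x \<bullet> (S *v x)"] sym_posdefD(2)[OF pd]
    by blast
  show thesis
  proof
    fix v assume "(S *v v) \<bullet> v \<le> 1"
    then show "norm v \<le> sqrt (1 / lam)"
      using lam by (intro norm_le_sqrt_of_coercive) (auto simp: inner_commute intro: order_trans)
  qed
qed

lemma stack_full_rank_norm_bound:
  fixes F :: "real^'n^'m" and H :: "real^'n^'p"
  assumes rank: "rank (stack F H) = CARD('n)"
  obtains M where "\<And>x. norm (F *v x) \<le> a \<Longrightarrow> norm (H *v x) \<le> b \<Longrightarrow> norm x \<le> M"
proof -
  have "continuous_on UNIV (\<lambda>x. norm (F *v x)^2 + norm (H *v x)^2)"
    by (intro continuous_intros linear_continuous_on matrix_vector_mul_bounded_linear)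
  moreover have "0 < norm (F *v x)^2 + norm (H *v x)^2" if "x \<noteq> 0" for x
  proof -
    have "F *v x \<noteq> 0 \<or> H *v x \<noteq> 0"
      using stack_full_rank_injective[OF rank] that by blast
    then show ?thesis
      by (auto intro: add_pos_nonneg add_nonneg_pos)
  qed
  moreover have "norm (F *v (c *\<^sub>R x))^2 + norm (H *v (c *\<^sub>R x))^2
                   = c^2 * (norm (F *v x)^2 + norm (H *v x)^2)" for c x
    by (simp add: matrix_vector_mult_scaleR power_mult_distrib algebra_simps)
  ultimately obtain lam
    where lam: "lam > 0" "\<And>x. lam * (norm x)^2 \<le> norm (F *v x)^2 + norm (H *v x)^2"
    using homogeneous_positive_bounded_below[of "\<lambda>x. norm (F *v x)^2 + norm (H *v x)^2"] by blast
  show thesis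
  proof
    fix x assume "norm (F *v x) \<le> a" "norm (H *v x) \<le> b"
    then have "norm (F *v x)^2 + norm (H *v x)^2 \<le> a^2 + b^2"
      by (intro add_mono power_mono) auto
    then show "norm x \<le> sqrt ((a^2 + b^2) / lam)"
      using lam by (intro norm_le_sqrt_of_coercive) (auto intro: order_trans)
  qed
qed

text \<open>The residual \<open>f\<^sub>i\<close> with the convention \<open>C\<^sub>-\<^sub>1 x\<^sub>-\<^sub>1 = 0\<close>. Since \<open>0 - 1 = 0\<close> on \<open>nat\<close>,
  \<open>f\<^sub>0\<close> is weighted by \<open>S (0 - 1) = S\<^sub>0\<close>, so the constraint becomes two uniform sums.\<close>

definition dyn_residual ::
    "(nat \<Rightarrow> real^'n^'m) \<Rightarrow> (nat \<Rightarrow> real^'n^'m) \<Rightarrow> (nat \<Rightarrow> real^'n) \<Rightarrow> nat \<Rightarrow> real^'m" where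
  "dyn_residual F C xs i = F i *v xs i - (if i = 0 then 0 else C (i - 1) *v xs (i - 1))"

lemma unc_eq_residual_sums:
  "unc F C H S R y xs k =
     (\<Sum>i=0..k. (S (i - 1) *v dyn_residual F C xs i) \<bullet> dyn_residual F C xs i)
     + (\<Sum>i=0..k. (R i *v (y i - H i *v xs i)) \<bullet> (y i - H i *v xs i))"
proof -
  have "(\<Sum>i=1..k. (S (i - 1) *v dyn_residual F C xs i) \<bullet> dyn_residual F C xs i) =
        (\<Sum>i=1..k. (S (i - 1) *v (F i *v xs i - C (i - 1) *v xs (i - 1)))
                     \<bullet> (F i *v xs i - C (i - 1) *v xs (i - 1)))"
    by (intro sum.cong) (auto simp: dyn_residual_def)
  then show ?thesis
    by (simp add: unc_def Let_def sum.atLeast_Suc_atMost dyn_residual_def)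
qed

lemma unc_le_one_residuals:
  assumes S_pd: "\<And>k. sym_posdef (S k)" and R_pd: "\<And>k. sym_posdef (R k)"
    and u: "unc F C H S R y xs k \<le> 1" and i: "i \<le> k"
  shows "(S (i - 1) *v dyn_residual F C xs i) \<bullet> dyn_residual F C xs i \<le> 1"
    and "(R i *v (y i - H i *v xs i)) \<bullet> (y i - H i *v xs i) \<le> 1"
proof -
  define f where "f i = (S (i - 1) *v dyn_residual F C xs i) \<bullet> dyn_residual F C xs i" for i
  define g where "g i = (R i *v (y i - H i *v xs i)) \<bullet> (y i - H i *v xs i)" for i
  have f: "0 \<le> f i" and g: "0 \<le> g i" for i
    unfolding f_def g_def by (simp_all add: inner_commute sym_posdef_nonneg S_pd R_pd)
  have "sum f {0..k} + sum g {0..k} \<le> 1"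
    using u by (simp add: unc_eq_residual_sums f_def g_def)
  moreover have "f i \<le> sum f {0..k}" "g i \<le> sum g {0..k}"
    using i f g by (auto intro: member_le_sum)
  moreover have "0 \<le> sum f {0..k}" "0 \<le> sum g {0..k}"
    using f g by (auto intro: sum_nonneg)
  ultimately show "f i \<le> 1" "g i \<le> 1"
    unfolding f_def g_def by linarith+
qed

lemma unc_le_one_residuals_bounded:
  assumes S_pd: "\<And>k. sym_posdef (S k)" and R_pd: "\<And>k. sym_posdef (R k)" and i: "i \<le> k"
  obtains M where "\<And>xs. unc F C H S R y xs k \<le> 1 \<Longrightarrow>
      norm (dyn_residual F C xs i) \<le> M \<and> norm (y i - H i *v xs i) \<le> M"
proof -
  obtain MS where MS: "\<And>v. (S (i - 1) *v v) \<bullet> v \<le> 1 \<Longrightarrow> norm v \<le> MS"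
    using sym_posdef_sublevel_bounded[OF S_pd] by blast
  obtain MR where MR: "\<And>v. (R i *v v) \<bullet> v \<le> 1 \<Longrightarrow> norm v \<le> MR"
    using sym_posdef_sublevel_bounded[OF R_pd] by blast
  show thesis
  proof (rule that)
    fix xs assume "unc F C H S R y xs k \<le> 1"
    then have "norm (dyn_residual F C xs i) \<le> MS" "norm (y i - H i *v xs i) \<le> MR"
      using MS MR unc_le_one_residuals[where S=S and R=R, OF S_pd R_pd _ i] by blast+
    then show "norm (dyn_residual F C xs i) \<le> max MS MR \<and> norm (y i - H i *v xs i) \<le> max MS MR"
      by auto
  qed
qed

lemma unc_le_one_state_bounded:
  fixes F C :: "nat \<Rightarrow> real^'n^'m" and H :: "nat \<Rightarrow> real^'n^'p"
  assumes S_pd: "\<And>k. sym_posdef (S k)" and R_pd: "\<And>k. sym_posdef (R k)"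
    and rank_full: "\<And>k. rank (stack (F k) (H k)) = CARD('n)"
  shows "i \<le> k \<Longrightarrow> \<exists>M. \<forall>xs. unc F C H S R y xs k \<le> 1 \<longrightarrow> norm (xs i) \<le> M"
proof (induction i rule: less_induct)
  case (less i)
  define prev where "prev xs = (if i = 0 then 0 else C (i - 1) *v xs (i - 1))" for xs
  obtain Mp where Mp: "\<And>xs. unc F C H S R y xs k \<le> 1 \<Longrightarrow> norm (prev xs) \<le> Mp"
  proof (cases i)
    case 0
    then show thesis by (intro that[of 0]) (simp add: prev_def)
  next
    case (Suc j)
    then obtain M where M: "\<And>xs. unc F C H S R y xs k \<le> 1 \<Longrightarrow> norm (xs j) \<le> M"
      using less by force
    obtain K where "\<And>x. norm (C j *v x) \<le> norm x * K" "K > 0"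
      using bounded_linear.pos_bounded[OF matrix_vector_mul_bounded_linear] by blast
    then have "norm (C j *v xs j) \<le> M * K" if "unc F C H S R y xs k \<le> 1" for xs
      using M[OF that] by (meson less_imp_le mult_right_mono order_trans)
    then show thesis
      by (intro that) (simp add: prev_def Suc)
  qed
  obtain Mr where Mr: "\<And>xs. unc F C H S R y xs k \<le> 1 \<Longrightarrow>
      norm (dyn_residual F C xs i) \<le> Mr \<and> norm (y i - H i *v xs i) \<le> Mr"
    using unc_le_one_residuals_bounded[where S=S and R=R, OF S_pd R_pd less.prems] by blast
  obtain M where M: "\<And>x. norm (F i *v x) \<le> Mr + Mp \<Longrightarrow> norm (H i *v x) \<le> norm (y i) + Mr \<Longrightarrow>
      norm x \<le> M"
    using stack_full_rank_norm_bound[OF rank_full] by blast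
  have "norm (xs i) \<le> M" if u: "unc F C H S R y xs k \<le> 1" for xs
  proof (rule M)
    have "F i *v xs i = dyn_residual F C xs i + prev xs"
      by (simp add: dyn_residual_def prev_def)
    then have "norm (F i *v xs i) \<le> norm (dyn_residual F C xs i) + norm (prev xs)"
      by (simp add: norm_triangle_ineq)
    then show "norm (F i *v xs i) \<le> Mr + Mp"
      using Mr[OF u] Mp[OF u] by linarith
    show "norm (H i *v xs i) \<le> norm (y i) + Mr"
      using Mr[OF u] norm_triangle_ineq2[of "y i" "H i *v xs i"]
        norm_triangle_ineq3[of "H i *v xs i" "y i"] by (auto simp: norm_minus_commute)
  qed
  then show ?case by blast
qed

lemma minimax_error_finite:
  fixes X :: "'a::real_inner set"
  assumes "z \<in> X" and "bounded X"
  shows "(INF z\<in>X. SUP x\<in>X. ereal \<bar>l \<bullet> (x - z)\<bar>) < \<infinity>"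
proof -
  obtain M where M: "\<And>x. x \<in> X \<Longrightarrow> norm x \<le> M"
    using assms(2) bounded_iff by blast
  have "(SUP x\<in>X. ereal \<bar>l \<bullet> (x - z)\<bar>) \<le> ereal (norm l * (M + norm z))"
  proof (rule SUP_least)
    fix x assume "x \<in> X"
    have "\<bar>l \<bullet> (x - z)\<bar> \<le> norm l * norm (x - z)"
      by (rule Cauchy_Schwarz_ineq2)
    also have "\<dots> \<le> norm l * (M + norm z)"
      using M[OF \<open>x \<in> X\<close>] norm_triangle_ineq4[of x z] by (intro mult_left_mono) auto
    finally show "ereal \<bar>l \<bullet> (x - z)\<bar> \<le> ereal (norm l * (M + norm z))"
      by simp
  qed
  then have "(INF z\<in>X. SUP x\<in>X. ereal \<bar>l \<bullet> (x - z)\<bar>) \<le> ereal (norm l * (M + norm z))"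
    by (rule INF_lower2[OF assms(1)])
  then show ?thesis
    using le_less_trans by fastforce
qed

theorem corollary1:
  fixes F C :: "nat \<Rightarrow> real^'n^'m" and H :: "nat \<Rightarrow> real^'n^'p"
    and S :: "nat \<Rightarrow> real^'m^'m" and R :: "nat \<Rightarrow> real^'p^'p"
    and y :: "nat \<Rightarrow> real^'p"
  assumes S_pd: "\<And>k. sym_posdef (S k)"
    and R_pd: "\<And>k. sym_posdef (R k)"
    and data: "\<exists>xs. \<forall>\<tau>. unc F C H S R y xs \<tau> \<le> 1"
    and rank_full: "\<And>k. rank (stack (F k) (H k)) = CARD('n)"
  shows "\<forall>k. noncaus_index F C H S R y k = 0 \<and>
             pinv (fst (Pr F C H S R y k)) *v snd (Pr F C H S R y k) = snd (Kf F C H S R y k)"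
proof
  fix k
  have rec: "sym_posdef (fst (Pr F C H S R y k))
     \<and> snd (Kf F C H S R y k) = matrix_inv (fst (Pr F C H S R y k)) *v snd (Pr F C H S R y k)"
    using Pr_posdef_Kf_eq[where F=F and C=C and H=H and S=S and R=R and y=y, OF S_pd R_pd rank_full]
    by blast
  obtain xs0 where "\<forall>\<tau>. unc F C H S R y xs0 \<tau> \<le> 1"
    using data by blast
  then have nonempty: "xs0 k \<in> Xset F C H S R y k"
    unfolding Xset_def by blast
  obtain M where "\<forall>xs. unc F C H S R y xs k \<le> 1 \<longrightarrow> norm (xs k) \<le> M"
    using unc_le_one_state_bounded[where S=S and R=R and F=F and H=H, OF S_pd R_pd rank_full] by blast
  then have "bounded (Xset F C H S R y k)"
    unfolding Xset_def bounded_iff by blast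
  then have "Lsub F C H S R y k = UNIV"
    using minimax_error_finite[OF nonempty] by (auto simp: Lsub_def rho_hat_def)
  then show "noncaus_index F C H S R y k = 0 \<and>
      pinv (fst (Pr F C H S R y k)) *v snd (Pr F C H S R y k) = snd (Kf F C H S R y k)"
    using rec by (simp add: noncaus_index_def pinv_invertible sym_posdef_invertible)
qed

end
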